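(* Let $G$ be a TDLC-group and $M$ a finitely generated discrete $\mathbb{Q}[G]$-module. Any two filling pseudo-norms on $M$ are equivalent. In particular, every filling pseudo-norm on a finitely generated proper permutation module $\mathbb{Q}[\Omega]$ is equivalent to the $\ell_1$-norm $\|\cdot\|_1^\Omega$, and hence is a norm.
   Context: A TDLC-group is a totally disconnected locally compact Hausdorff topological group. A discrete $\mathbb{Q}[G]$-module is a left $\mathbb{Q}[G]$-module in which every element has open stabilizer. A $G$-set $\Omega$ is proper if all point stabilizers are compact open; $\mathbb{Q}[\Omega]$ is then a proper permutation module, finitely generated iff $\Omega/G$ is finite, with $\ell_1$-norm $\|\sum a_\omega\omega\|_1^\Omega=\sum|a_\omega|$. For a surjection $\partial:\mathbb{Q}[\Omega]\twoheadrightarrow M$ from a finitely generated proper permutation module, the filling pseudo-norm is $\|m\|_\partial=\inf\{\|x\|_1^\Omega:\partial(x)=m\}$. Two pseudo-norms $\|\cdot\|,\|\cdot\|'$ on a vector space $V$ are equivalent if there is $C>0$ with $\|v\|\le C\|v\|'$ and $\|v\|'\le C\|v\|$ for all $v\in V$. *)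

theory Defs
  imports "HOL-Analysis.Analysis" "HOL-Algebra.Group_Action" "HOL-Library.Function_Algebras"
begin

definition totally_disconnected_space :: "'a topology \<Rightarrow> bool" where
  "totally_disconnected_space X \<longleftrightarrow> (\<forall>S. connectedin X S \<longrightarrow> (\<exists>a. S \<subseteq> {a}))"

definition TDLC_group :: "('g, 'b) monoid_scheme \<Rightarrow> 'g topology \<Rightarrow> bool" where
  "TDLC_group G T \<longleftrightarrow> group G \<and> topspace T = carrier G
     \<and> continuous_map (prod_topology T T) T (\<lambda>p. fst p \<otimes>\<^bsub>G\<^esub> snd p)
     \<and> continuous_map T T (\<lambda>g. inv\<^bsub>G\<^esub> g)
     \<and> Hausdorff_space T \<and> locally_compact_space T \<and> totally_disconnected_space T"

text \<open>A Q[G]-module: a Q-subspace M of a rational vector space (scalar multiplication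
  smul) with a linear G-action act on M; discrete: every stabiliser is open.\<close>

definition discrete_QG_module ::
  "('g, 'b) monoid_scheme \<Rightarrow> 'g topology \<Rightarrow> 'm::ab_group_add set \<Rightarrow> (rat \<Rightarrow> 'm \<Rightarrow> 'm)
     \<Rightarrow> ('g \<Rightarrow> 'm \<Rightarrow> 'm) \<Rightarrow> bool" where
  "discrete_QG_module G T M smul act \<longleftrightarrow>
     vector_space smul \<and> module.subspace smul M
     \<and> (\<forall>g\<in>carrier G. \<forall>x\<in>M. act g x \<in> M)
     \<and> (\<forall>g\<in>carrier G. \<forall>x\<in>M. \<forall>y\<in>M. act g (x + y) = act g x + act g y)
     \<and> (\<forall>g\<in>carrier G. \<forall>c. \<forall>x\<in>M. act g (smul c x) = smul c (act g x))
     \<and> (\<forall>x\<in>M. act \<one>\<^bsub>G\<^esub> x = x)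
     \<and> (\<forall>g\<in>carrier G. \<forall>h\<in>carrier G. \<forall>x\<in>M. act (g \<otimes>\<^bsub>G\<^esub> h) x = act g (act h x))
     \<and> (\<forall>x\<in>M. openin T {g \<in> carrier G. act g x = x})"

definition fg_discrete_QG_module ::
  "('g, 'b) monoid_scheme \<Rightarrow> 'g topology \<Rightarrow> 'm::ab_group_add set \<Rightarrow> (rat \<Rightarrow> 'm \<Rightarrow> 'm)
     \<Rightarrow> ('g \<Rightarrow> 'm \<Rightarrow> 'm) \<Rightarrow> bool" where
  "fg_discrete_QG_module G T M smul act \<longleftrightarrow> discrete_QG_module G T M smul act
     \<and> (\<exists>S. finite S \<and> S \<subseteq> M \<and> M = module.span smul (\<Union>g\<in>carrier G. act g ` S))"

definition proper_G_set :: "('g, 'b) monoid_scheme \<Rightarrow> 'g topology \<Rightarrow> 'w set \<Rightarrow> ('g \<Rightarrow> 'w \<Rightarrow> 'w) \<Rightarrow> bool" where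
  "proper_G_set G T \<Omega> \<alpha> \<longleftrightarrow> group_action G \<Omega> \<alpha>
     \<and> (\<forall>\<omega>\<in>\<Omega>. compactin T {g \<in> carrier G. \<alpha> g \<omega> = \<omega>} \<and> openin T {g \<in> carrier G. \<alpha> g \<omega> = \<omega>})"

definition fg_proper_G_set :: "('g, 'b) monoid_scheme \<Rightarrow> 'g topology \<Rightarrow> 'w set \<Rightarrow> ('g \<Rightarrow> 'w \<Rightarrow> 'w) \<Rightarrow> bool" where
  "fg_proper_G_set G T \<Omega> \<alpha> \<longleftrightarrow> proper_G_set G T \<Omega> \<alpha>
     \<and> (\<exists>F. finite F \<and> F \<subseteq> \<Omega> \<and> (\<forall>\<omega>\<in>\<Omega>. \<exists>g\<in>carrier G. \<exists>f\<in>F. \<omega> = \<alpha> g f))"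

text \<open>Q[\<Omega>]: finitely supported rational functions on \<Omega>.\<close>
definition supp_q :: "('w \<Rightarrow> rat) \<Rightarrow> 'w set" where
  "supp_q x = {\<omega>. x \<omega> \<noteq> 0}"

definition perm_module :: "'w set \<Rightarrow> ('w \<Rightarrow> rat) set" where
  "perm_module \<Omega> = {x. finite (supp_q x) \<and> supp_q x \<subseteq> \<Omega>}"

definition perm_scale :: "rat \<Rightarrow> ('w \<Rightarrow> rat) \<Rightarrow> ('w \<Rightarrow> rat)" where
  "perm_scale c x = (\<lambda>\<omega>. c * x \<omega>)"

text \<open>The action (g x)(\<omega>) = x(g^-1 \<omega>), i.e. g . (sum a_w w) = sum a_w (g w).\<close>
definition perm_act :: "('g, 'b) monoid_scheme \<Rightarrow> ('g \<Rightarrow> 'w \<Rightarrow> 'w) \<Rightarrow> 'w set \<Rightarrow> 'g \<Rightarrow> ('w \<Rightarrow> rat) \<Rightarrow> ('w \<Rightarrow> rat)" where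
  "perm_act G \<alpha> \<Omega> g x = (\<lambda>\<omega>. if \<omega> \<in> \<Omega> then x (\<alpha> (inv\<^bsub>G\<^esub> g) \<omega>) else 0)"

definition l1_norm :: "('w \<Rightarrow> rat) \<Rightarrow> real" where
  "l1_norm x = (\<Sum>\<omega>\<in>supp_q x. \<bar>real_of_rat (x \<omega>)\<bar>)"

definition filling ::
  "('g, 'b) monoid_scheme \<Rightarrow> 'g topology \<Rightarrow> 'm::ab_group_add set \<Rightarrow> (rat \<Rightarrow> 'm \<Rightarrow> 'm)
     \<Rightarrow> ('g \<Rightarrow> 'm \<Rightarrow> 'm) \<Rightarrow> 'w set \<Rightarrow> ('g \<Rightarrow> 'w \<Rightarrow> 'w) \<Rightarrow> (('w \<Rightarrow> rat) \<Rightarrow> 'm) \<Rightarrow> bool" where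
  "filling G T M smul act \<Omega> \<alpha> d \<longleftrightarrow> fg_proper_G_set G T \<Omega> \<alpha>
     \<and> d ` perm_module \<Omega> = M
     \<and> (\<forall>x\<in>perm_module \<Omega>. \<forall>y\<in>perm_module \<Omega>. d (x + y) = d x + d y)
     \<and> (\<forall>c. \<forall>x\<in>perm_module \<Omega>. d (perm_scale c x) = smul c (d x))
     \<and> (\<forall>g\<in>carrier G. \<forall>x\<in>perm_module \<Omega>. d (perm_act G \<alpha> \<Omega> g x) = act g (d x))"

definition filling_norm :: "'w set \<Rightarrow> (('w \<Rightarrow> rat) \<Rightarrow> 'm) \<Rightarrow> 'm \<Rightarrow> real" where
  "filling_norm \<Omega> d m = Inf (l1_norm ` {x \<in> perm_module \<Omega>. d x = m})"

definition equivalent_pseudo_norms :: "'v set \<Rightarrow> ('v \<Rightarrow> real) \<Rightarrow> ('v \<Rightarrow> real) \<Rightarrow> bool" where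
  "equivalent_pseudo_norms V n1 n2 \<longleftrightarrow>
     (\<exists>C>0. \<forall>v\<in>V. n1 v \<le> C * n2 v \<and> n2 v \<le> C * n1 v)"

end

theory Submission
  imports Defs
begin

text \<open>If \<open>d\<^sub>1 : \<rat>[\<Omega>\<^sub>1] \<rightarrow> M\<close> and \<open>d\<^sub>2 : \<rat>[\<Omega>\<^sub>2] \<rightarrow> M\<close> are surjective \<open>\<rat>[G]\<close>-linear and
  \<open>\<Omega>\<^sub>1\<close> has finitely many orbits, lift \<open>d\<^sub>1 f\<close> through \<open>d\<^sub>2\<close> for each of finitely many orbit
  representatives \<open>f\<close>. Translating these lifts by \<open>G\<close> lifts every basis vector \<open>\<omega> \<in> \<Omega>\<^sub>1\<close> with
  \<open>\<ell>\<^sub>1\<close>-norm at most a uniform constant \<open>C\<close>, as \<open>G\<close> acts isometrically; by linearity every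
  \<open>x\<close> then has a lift of norm at most \<open>C \<parallel>x\<parallel>\<^sub>1\<close>, whence \<open>\<parallel>m\<parallel>\<^sub>d\<^sub>2 \<le> C \<parallel>m\<parallel>\<^sub>d\<^sub>1\<close>.
  The identity of \<open>\<rat>[\<Omega>]\<close> is a filling whose pseudo-norm is \<open>\<parallel>\<cdot>\<parallel>\<^sub>1\<close>, which gives the second
  claim.\<close>

lemma (in group_action) inv_action_eq_iff:
  assumes "g \<in> carrier G" "v \<in> E" "w \<in> E"
  shows "\<phi> (inv g) v = w \<longleftrightarrow> v = \<phi> g w"
proof -
  interpret group G
    using group_hom group_hom.axioms(1) by blast
  show ?thesis
    using orbit_sym_aux[OF assms(1,3)] orbit_sym_aux[of "inv g" v] assms by auto
qed

lemma (in group_action) inv_action_closed: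
  assumes "g \<in> carrier G" "w \<in> E"
  shows "\<phi> (inv g) w \<in> E"
proof -
  interpret group G
    using group_hom group_hom.axioms(1) by blast
  show ?thesis
    using element_image[OF inv_closed[OF assms(1)] assms(2) refl] .
qed

definition perm_basis :: "'w \<Rightarrow> ('w \<Rightarrow> rat)" where
  "perm_basis w = (\<lambda>v. if v = w then 1 else 0)"

definition perm_linear :: "'w set \<Rightarrow> (rat \<Rightarrow> 'm::ab_group_add \<Rightarrow> 'm) \<Rightarrow> (('w \<Rightarrow> rat) \<Rightarrow> 'm) \<Rightarrow> bool" where
  "perm_linear \<Omega> smul d \<longleftrightarrow>
     (\<forall>x\<in>perm_module \<Omega>. \<forall>y\<in>perm_module \<Omega>. d (x + y) = d x + d y)
     \<and> (\<forall>c. \<forall>x\<in>perm_module \<Omega>. d (perm_scale c x) = smul c (d x))"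

lemma filling_iff:
  "filling G T M smul act \<Omega> \<alpha> d \<longleftrightarrow> fg_proper_G_set G T \<Omega> \<alpha> \<and> d ` perm_module \<Omega> = M
     \<and> perm_linear \<Omega> smul d
     \<and> (\<forall>g\<in>carrier G. \<forall>x\<in>perm_module \<Omega>. d (perm_act G \<alpha> \<Omega> g x) = act g (d x))"
  unfolding filling_def perm_linear_def by blast

lemma fg_proper_G_setD:
  assumes "fg_proper_G_set G T \<Omega> \<alpha>"
  obtains F where "group_action G \<Omega> \<alpha>" "finite F" "F \<subseteq> \<Omega>"
    "\<forall>\<omega>\<in>\<Omega>. \<exists>g\<in>carrier G. \<exists>f\<in>F. \<omega> = \<alpha> g f"
  using assms unfolding fg_proper_G_set_def proper_G_set_def by blast

subsection \<open>The permutation module and its \<open>\<ell>\<^sub>1\<close>-norm\<close>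

lemma perm_module_add: "x \<in> perm_module \<Omega> \<Longrightarrow> y \<in> perm_module \<Omega> \<Longrightarrow> x + y \<in> perm_module \<Omega>"
proof -
  assume "x \<in> perm_module \<Omega>" "y \<in> perm_module \<Omega>"
  moreover have "supp_q (x + y) \<subseteq> supp_q x \<union> supp_q y"
    by (auto simp: supp_q_def)
  ultimately show ?thesis
    unfolding perm_module_def by (auto intro: finite_subset)
qed

lemma perm_module_scale: "x \<in> perm_module \<Omega> \<Longrightarrow> perm_scale c x \<in> perm_module \<Omega>"
proof -
  assume "x \<in> perm_module \<Omega>"
  moreover have "supp_q (perm_scale c x) \<subseteq> supp_q x"
    by (auto simp: supp_q_def perm_scale_def)
  ultimately show ?thesis
    unfolding perm_module_def by (auto intro: finite_subset)
qed

lemma perm_module_zero: "0 \<in> perm_module \<Omega>"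
  by (simp add: perm_module_def supp_q_def)

lemma supp_perm_basis: "supp_q (perm_basis w) = {w}"
  by (auto simp: supp_q_def perm_basis_def)

lemma perm_basis_in_perm_module: "w \<in> \<Omega> \<Longrightarrow> perm_basis w \<in> perm_module \<Omega>"
  by (simp add: perm_module_def supp_perm_basis)

lemma perm_linear_add:
  "perm_linear \<Omega> smul d \<Longrightarrow> x \<in> perm_module \<Omega> \<Longrightarrow> y \<in> perm_module \<Omega> \<Longrightarrow> d (x + y) = d x + d y"
  unfolding perm_linear_def by blast

lemma perm_linear_scale:
  "perm_linear \<Omega> smul d \<Longrightarrow> x \<in> perm_module \<Omega> \<Longrightarrow> d (perm_scale c x) = smul c (d x)"
  unfolding perm_linear_def by blast

lemma perm_linear_zero:
  assumes "perm_linear \<Omega> smul d"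
  shows "d 0 = 0"
proof -
  have "d (0 + 0) = d 0 + d 0"
    using perm_linear_add[OF assms perm_module_zero perm_module_zero] .
  then show ?thesis
    by simp
qed

lemma l1_norm_nonneg: "l1_norm x \<ge> 0"
  unfolding l1_norm_def by (simp add: sum_nonneg)

lemma l1_norm_zero [simp]: "l1_norm 0 = 0"
  by (simp add: l1_norm_def supp_q_def)

lemma l1_norm_eq_sum:
  assumes "finite A" "supp_q x \<subseteq> A"
  shows "l1_norm x = (\<Sum>w\<in>A. \<bar>real_of_rat (x w)\<bar>)"
  unfolding l1_norm_def
  by (rule sum.mono_neutral_left) (use assms in \<open>auto simp: supp_q_def\<close>)

lemma l1_norm_triangle:
  assumes "x \<in> perm_module \<Omega>" "y \<in> perm_module \<Omega>"
  shows "l1_norm (x + y) \<le> l1_norm x + l1_norm y"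
proof -
  let ?A = "supp_q x \<union> supp_q y"
  have A: "finite ?A"
    using assms by (simp add: perm_module_def)
  have "l1_norm (x + y) = (\<Sum>w\<in>?A. \<bar>real_of_rat (x w + y w)\<bar>)"
    by (subst l1_norm_eq_sum[OF A]) (auto simp: supp_q_def)
  also have "\<dots> \<le> (\<Sum>w\<in>?A. \<bar>real_of_rat (x w)\<bar> + \<bar>real_of_rat (y w)\<bar>)"
    by (rule sum_mono) (metis abs_triangle_ineq of_rat_add)
  also have "\<dots> = l1_norm x + l1_norm y"
    by (simp add: sum.distrib l1_norm_eq_sum[OF A])
  finally show ?thesis .
qed

lemma l1_norm_scale: "l1_norm (perm_scale c x) = \<bar>real_of_rat c\<bar> * l1_norm x"
proof (cases "c = 0")
  case True
  then show ?thesis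
    by (simp add: l1_norm_def perm_scale_def supp_q_def)
next
  case False
  then have "supp_q (perm_scale c x) = supp_q x"
    by (auto simp: supp_q_def perm_scale_def)
  then show ?thesis
    by (simp add: l1_norm_def perm_scale_def sum_distrib_left of_rat_mult abs_mult)
qed

lemma l1_norm_fun_upd_zero:
  assumes "finite (supp_q x)"
  shows "l1_norm x = \<bar>real_of_rat (x w)\<bar> + l1_norm (x(w := 0))"
proof -
  let ?A = "insert w (supp_q x)"
  have "l1_norm x = (\<Sum>v\<in>?A. \<bar>real_of_rat (x v)\<bar>)"
    using assms by (intro l1_norm_eq_sum) auto
  also have "\<dots> = \<bar>real_of_rat (x w)\<bar> + (\<Sum>v\<in>?A - {w}. \<bar>real_of_rat (x v)\<bar>)"
    using assms by (simp add: sum.insert_remove)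
  also have "(\<Sum>v\<in>?A - {w}. \<bar>real_of_rat (x v)\<bar>) = l1_norm (x(w := 0))"
    using assms by (subst l1_norm_eq_sum[of "?A - {w}"]) (auto simp: supp_q_def intro: sum.cong)
  finally show ?thesis .
qed

lemma l1_norm_eq_0D: "x \<in> perm_module \<Omega> \<Longrightarrow> l1_norm x = 0 \<Longrightarrow> x = 0"
  unfolding l1_norm_def perm_module_def
  by (auto simp: sum_nonneg_eq_0_iff supp_q_def fun_eq_iff)

lemma supp_perm_act:
  assumes \<alpha>: "group_action G \<Omega> \<alpha>" and g: "g \<in> carrier G" and x: "x \<in> perm_module \<Omega>"
  shows "supp_q (perm_act G \<alpha> \<Omega> g x) = \<alpha> g ` supp_q x"
proof
  interpret group_action G \<Omega> \<alpha> by (fact \<alpha>)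
  have supp: "supp_q x \<subseteq> \<Omega>"
    using x by (simp add: perm_module_def)
  show "supp_q (perm_act G \<alpha> \<Omega> g x) \<subseteq> \<alpha> g ` supp_q x"
  proof
    fix v assume "v \<in> supp_q (perm_act G \<alpha> \<Omega> g x)"
    then have v: "v \<in> \<Omega>" "\<alpha> (inv\<^bsub>G\<^esub> g) v \<in> supp_q x"
      by (auto simp: supp_q_def perm_act_def split: if_splits)
    then have "v = \<alpha> g (\<alpha> (inv\<^bsub>G\<^esub> g) v)"
      using inv_action_eq_iff[OF g v(1) inv_action_closed[OF g v(1)]] by blast
    with v(2) show "v \<in> \<alpha> g ` supp_q x"
      by blast
  qed
  show "\<alpha> g ` supp_q x \<subseteq> supp_q (perm_act G \<alpha> \<Omega> g x)"
  proof
    fix v assume "v \<in> \<alpha> g ` supp_q x"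
    then obtain w where w: "w \<in> supp_q x" "v = \<alpha> g w"
      by blast
    have "w \<in> \<Omega>"
      using w(1) supp by blast
    then have "v \<in> \<Omega>" "\<alpha> (inv\<^bsub>G\<^esub> g) v = w"
      using element_image[OF g _ refl] orbit_sym_aux[OF g _ refl] w(2) by simp_all
    with w(1) show "v \<in> supp_q (perm_act G \<alpha> \<Omega> g x)"
      by (simp add: supp_q_def perm_act_def)
  qed
qed

lemma perm_act_in_perm_module:
  assumes "group_action G \<Omega> \<alpha>" "g \<in> carrier G" "x \<in> perm_module \<Omega>"
  shows "perm_act G \<alpha> \<Omega> g x \<in> perm_module \<Omega>"
  using supp_perm_act[OF assms] assms group_action.surj_prop[OF assms(1,2)]
  unfolding perm_module_def by auto

lemma l1_norm_perm_act:
  assumes \<alpha>: "group_action G \<Omega> \<alpha>" and g: "g \<in> carrier G" and x: "x \<in> perm_module \<Omega>"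
  shows "l1_norm (perm_act G \<alpha> \<Omega> g x) = l1_norm x"
proof -
  interpret group_action G \<Omega> \<alpha> by (fact \<alpha>)
  have supp: "supp_q x \<subseteq> \<Omega>"
    using x by (simp add: perm_module_def)
  have "l1_norm (perm_act G \<alpha> \<Omega> g x)
      = (\<Sum>w\<in>supp_q x. \<bar>real_of_rat (perm_act G \<alpha> \<Omega> g x (\<alpha> g w))\<bar>)"
    unfolding l1_norm_def supp_perm_act[OF assms]
    by (simp add: sum.reindex[OF inj_on_subset[OF inj_prop[OF g] supp]])
  also have "\<dots> = l1_norm x"
    unfolding l1_norm_def perm_act_def
    using supp orbit_sym_aux[OF g _ refl] element_image[OF g _ refl] by (intro sum.cong) auto
  finally show ?thesis .
qed

lemma perm_act_perm_basis:
  assumes \<alpha>: "group_action G \<Omega> \<alpha>" and g: "g \<in> carrier G" and f: "f \<in> \<Omega>"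
  shows "perm_act G \<alpha> \<Omega> g (perm_basis f) = perm_basis (\<alpha> g f)"
proof
  interpret group_action G \<Omega> \<alpha> by (fact \<alpha>)
  fix v
  show "perm_act G \<alpha> \<Omega> g (perm_basis f) v = perm_basis (\<alpha> g f) v"
  proof (cases "v \<in> \<Omega>")
    case True
    then show ?thesis
      using inv_action_eq_iff[OF g True f] by (simp add: perm_act_def perm_basis_def)
  next
    case False
    then show ?thesis
      using element_image[OF g f refl] by (auto simp: perm_act_def perm_basis_def)
  qed
qed

subsection \<open>Bounded lifts and filling pseudo-norms\<close>

lemma bounded_lift_of_bounded_basis_lifts:
  assumes d1: "perm_linear \<Omega>\<^sub>1 smul d\<^sub>1" and d2: "perm_linear \<Omega>\<^sub>2 smul d\<^sub>2"
    and basis: "\<And>w. w \<in> \<Omega>\<^sub>1 \<Longrightarrow> \<exists>z\<in>perm_module \<Omega>\<^sub>2. d\<^sub>2 z = d\<^sub>1 (perm_basis w) \<and> l1_norm z \<le> C"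
    and x: "x \<in> perm_module \<Omega>\<^sub>1"
  shows "\<exists>y\<in>perm_module \<Omega>\<^sub>2. d\<^sub>2 y = d\<^sub>1 x \<and> l1_norm y \<le> C * l1_norm x"
proof -
  have "\<exists>y\<in>perm_module \<Omega>\<^sub>2. d\<^sub>2 y = d\<^sub>1 x \<and> l1_norm y \<le> C * l1_norm x"
    if "finite S" "supp_q x = S" "x \<in> perm_module \<Omega>\<^sub>1" for S x
    using that
  proof (induction S arbitrary: x rule: finite_induct)
    case empty
    then have "x = 0"
      by (auto simp: supp_q_def fun_eq_iff)
    moreover have "d\<^sub>2 0 = d\<^sub>1 0"
      by (simp add: perm_linear_zero[OF d1] perm_linear_zero[OF d2])
    ultimately show ?case
      using perm_module_zero[of \<Omega>\<^sub>2] by (metis l1_norm_zero mult_zero_right order_refl)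
  next
    case (insert w S)
    let ?x' = "x(w := 0)"
    have w: "w \<in> \<Omega>\<^sub>1"
      using insert.prems by (auto simp: perm_module_def)
    have "supp_q ?x' = S"
      using insert by (auto simp: supp_q_def)
    then have x': "?x' \<in> perm_module \<Omega>\<^sub>1" "supp_q ?x' = S"
      using insert by (auto simp: perm_module_def)
    obtain y' where y': "y' \<in> perm_module \<Omega>\<^sub>2" "d\<^sub>2 y' = d\<^sub>1 ?x'" "l1_norm y' \<le> C * l1_norm ?x'"
      using insert.IH x' by blast
    obtain z where z: "z \<in> perm_module \<Omega>\<^sub>2" "d\<^sub>2 z = d\<^sub>1 (perm_basis w)" "l1_norm z \<le> C"
      using basis[OF w] by blast
    let ?y = "y' + perm_scale (x w) z"
    have "x = ?x' + perm_scale (x w) (perm_basis w)"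
      by (auto simp: fun_eq_iff perm_scale_def perm_basis_def)
    then have "d\<^sub>1 x = d\<^sub>1 ?x' + smul (x w) (d\<^sub>1 (perm_basis w))"
      by (metis perm_linear_add[OF d1 x'(1)] perm_linear_scale[OF d1]
          perm_module_scale perm_basis_in_perm_module[OF w])
    also have "\<dots> = d\<^sub>2 ?y"
      using y' z by (simp add: perm_linear_add[OF d2] perm_linear_scale[OF d2] perm_module_scale)
    finally have lift: "d\<^sub>2 ?y = d\<^sub>1 x" ..
    have "l1_norm ?y \<le> l1_norm y' + \<bar>real_of_rat (x w)\<bar> * l1_norm z"
      using l1_norm_triangle[OF y'(1) perm_module_scale[OF z(1)]] by (simp add: l1_norm_scale)
    also have "\<dots> \<le> C * l1_norm ?x' + \<bar>real_of_rat (x w)\<bar> * C"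
      using y'(3) z(3) by (intro add_mono mult_left_mono) auto
    also have "\<dots> = C * l1_norm x"
      using l1_norm_fun_upd_zero[of x w] insert by (simp add: algebra_simps)
    finally show ?case
      using lift y'(1) z(1) perm_module_add perm_module_scale by blast
  qed
  moreover have "finite (supp_q x)"
    using x by (simp add: perm_module_def)
  ultimately show ?thesis
    using x by blast
qed

lemma uniformly_bounded_basis_lifts:
  assumes \<alpha>1: "group_action G \<Omega>\<^sub>1 \<alpha>\<^sub>1" and \<alpha>2: "group_action G \<Omega>\<^sub>2 \<alpha>\<^sub>2"
    and F: "finite F" "F \<subseteq> \<Omega>\<^sub>1" "\<forall>\<omega>\<in>\<Omega>\<^sub>1. \<exists>g\<in>carrier G. \<exists>f\<in>F. \<omega> = \<alpha>\<^sub>1 g f"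
    and equiv1: "\<forall>g\<in>carrier G. \<forall>x\<in>perm_module \<Omega>\<^sub>1. d\<^sub>1 (perm_act G \<alpha>\<^sub>1 \<Omega>\<^sub>1 g x) = act g (d\<^sub>1 x)"
    and equiv2: "\<forall>g\<in>carrier G. \<forall>x\<in>perm_module \<Omega>\<^sub>2. d\<^sub>2 (perm_act G \<alpha>\<^sub>2 \<Omega>\<^sub>2 g x) = act g (d\<^sub>2 x)"
    and image: "d\<^sub>1 ` perm_module \<Omega>\<^sub>1 \<subseteq> d\<^sub>2 ` perm_module \<Omega>\<^sub>2"
  obtains C where "C > 0"
    "\<And>w. w \<in> \<Omega>\<^sub>1 \<Longrightarrow> \<exists>z\<in>perm_module \<Omega>\<^sub>2. d\<^sub>2 z = d\<^sub>1 (perm_basis w) \<and> l1_norm z \<le> C"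
proof -
  have "\<forall>f\<in>F. \<exists>y. y \<in> perm_module \<Omega>\<^sub>2 \<and> d\<^sub>2 y = d\<^sub>1 (perm_basis f)"
  proof
    fix f assume "f \<in> F"
    then have "perm_basis f \<in> perm_module \<Omega>\<^sub>1"
      using F(2) by (intro perm_basis_in_perm_module) blast
    then have "d\<^sub>1 (perm_basis f) \<in> d\<^sub>2 ` perm_module \<Omega>\<^sub>2"
      using image by blast
    then obtain y where "y \<in> perm_module \<Omega>\<^sub>2" "d\<^sub>1 (perm_basis f) = d\<^sub>2 y"
      by (rule imageE)
    then show "\<exists>y. y \<in> perm_module \<Omega>\<^sub>2 \<and> d\<^sub>2 y = d\<^sub>1 (perm_basis f)"
      by auto
  qed
  then obtain Y where Y: "\<forall>f\<in>F. Y f \<in> perm_module \<Omega>\<^sub>2 \<and> d\<^sub>2 (Y f) = d\<^sub>1 (perm_basis f)"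
    by (rule bchoice[THEN exE])
  define C where "C = 1 + (\<Sum>f\<in>F. l1_norm (Y f))"
  have Y_le: "l1_norm (Y f) \<le> C" if "f \<in> F" for f
  proof -
    have "l1_norm (Y f) \<le> (\<Sum>f\<in>F. l1_norm (Y f))"
      using F(1) that by (intro member_le_sum) (auto simp: l1_norm_nonneg)
    then show ?thesis
      unfolding C_def by simp
  qed
  show thesis
  proof
    show "C > 0"
      unfolding C_def by (simp add: add_pos_nonneg sum_nonneg l1_norm_nonneg)
  next
    fix w assume "w \<in> \<Omega>\<^sub>1"
    then obtain g f where g: "g \<in> carrier G" and f: "f \<in> F" and w: "w = \<alpha>\<^sub>1 g f"
      using F(3) by blast
    have f\<Omega>: "f \<in> \<Omega>\<^sub>1"
      using f F(2) by blast
    let ?z = "perm_act G \<alpha>\<^sub>2 \<Omega>\<^sub>2 g (Y f)"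
    have "d\<^sub>2 ?z = act g (d\<^sub>1 (perm_basis f))"
      using equiv2 g Y[rule_format, OF f] by simp
    also have "\<dots> = d\<^sub>1 (perm_act G \<alpha>\<^sub>1 \<Omega>\<^sub>1 g (perm_basis f))"
      using equiv1 g perm_basis_in_perm_module[OF f\<Omega>] by simp
    also have "\<dots> = d\<^sub>1 (perm_basis w)"
      by (simp add: perm_act_perm_basis[OF \<alpha>1 g f\<Omega>] w)
    finally show "\<exists>z\<in>perm_module \<Omega>\<^sub>2. d\<^sub>2 z = d\<^sub>1 (perm_basis w) \<and> l1_norm z \<le> C"
      using perm_act_in_perm_module[OF \<alpha>2 g] l1_norm_perm_act[OF \<alpha>2 g] Y[rule_format, OF f] Y_le[OF f]
      by auto
  qed
qed

lemma filling_norm_nonneg: "m \<in> d ` perm_module \<Omega> \<Longrightarrow> filling_norm \<Omega> d m \<ge> 0"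
  unfolding filling_norm_def by (rule cInf_greatest) (auto simp: l1_norm_nonneg)

lemma filling_norm_le_of_bounded_lift:
  assumes C: "C > 0" and m: "m \<in> d\<^sub>1 ` perm_module \<Omega>\<^sub>1"
    and lift: "\<And>x. x \<in> perm_module \<Omega>\<^sub>1 \<Longrightarrow> \<exists>y\<in>perm_module \<Omega>\<^sub>2. d\<^sub>2 y = d\<^sub>1 x \<and> l1_norm y \<le> C * l1_norm x"
  shows "filling_norm \<Omega>\<^sub>2 d\<^sub>2 m \<le> C * filling_norm \<Omega>\<^sub>1 d\<^sub>1 m"
proof -
  have "filling_norm \<Omega>\<^sub>2 d\<^sub>2 m / C \<le> filling_norm \<Omega>\<^sub>1 d\<^sub>1 m"
    unfolding filling_norm_def
  proof (rule cInf_greatest)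
    show "l1_norm ` {x \<in> perm_module \<Omega>\<^sub>1. d\<^sub>1 x = m} \<noteq> {}"
      using m by auto
  next
    fix t assume "t \<in> l1_norm ` {x \<in> perm_module \<Omega>\<^sub>1. d\<^sub>1 x = m}"
    then obtain x where x: "x \<in> perm_module \<Omega>\<^sub>1" "d\<^sub>1 x = m" "t = l1_norm x"
      by auto
    obtain y where y: "y \<in> perm_module \<Omega>\<^sub>2" "d\<^sub>2 y = m" "l1_norm y \<le> C * t"
      using lift[OF x(1)] x by auto
    have "Inf (l1_norm ` {x \<in> perm_module \<Omega>\<^sub>2. d\<^sub>2 x = m}) \<le> l1_norm y"
      using y by (intro cInf_lower bdd_belowI[of _ 0]) (auto simp: l1_norm_nonneg)
    then show "Inf (l1_norm ` {x \<in> perm_module \<Omega>\<^sub>2. d\<^sub>2 x = m}) / C \<le> t"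
      using y(3) C by (simp add: divide_le_eq mult.commute)
  qed
  then show ?thesis
    using C by (simp add: divide_le_eq mult.commute)
qed

lemma filling_norm_dominated:
  assumes d1: "filling G T M smul act \<Omega>\<^sub>1 \<alpha>\<^sub>1 d\<^sub>1" and d2: "filling G T M smul act \<Omega>\<^sub>2 \<alpha>\<^sub>2 d\<^sub>2"
  obtains C where "C > 0" "\<And>m. m \<in> M \<Longrightarrow> filling_norm \<Omega>\<^sub>2 d\<^sub>2 m \<le> C * filling_norm \<Omega>\<^sub>1 d\<^sub>1 m"
proof -
  obtain F where \<alpha>1: "group_action G \<Omega>\<^sub>1 \<alpha>\<^sub>1"
    and F: "finite F" "F \<subseteq> \<Omega>\<^sub>1" "\<forall>\<omega>\<in>\<Omega>\<^sub>1. \<exists>g\<in>carrier G. \<exists>f\<in>F. \<omega> = \<alpha>\<^sub>1 g f"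
    using d1 by (auto simp: filling_iff elim!: fg_proper_G_setD)
  have \<alpha>2: "group_action G \<Omega>\<^sub>2 \<alpha>\<^sub>2"
    using d2 by (auto simp: filling_iff elim!: fg_proper_G_setD)
  have lin: "perm_linear \<Omega>\<^sub>1 smul d\<^sub>1" "perm_linear \<Omega>\<^sub>2 smul d\<^sub>2"
    and image: "d\<^sub>1 ` perm_module \<Omega>\<^sub>1 = M" "d\<^sub>2 ` perm_module \<Omega>\<^sub>2 = M"
    and equiv1: "\<forall>g\<in>carrier G. \<forall>x\<in>perm_module \<Omega>\<^sub>1. d\<^sub>1 (perm_act G \<alpha>\<^sub>1 \<Omega>\<^sub>1 g x) = act g (d\<^sub>1 x)"
    and equiv2: "\<forall>g\<in>carrier G. \<forall>x\<in>perm_module \<Omega>\<^sub>2. d\<^sub>2 (perm_act G \<alpha>\<^sub>2 \<Omega>\<^sub>2 g x) = act g (d\<^sub>2 x)"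
    using d1 d2 by (simp_all add: filling_iff)
  have "d\<^sub>1 ` perm_module \<Omega>\<^sub>1 \<subseteq> d\<^sub>2 ` perm_module \<Omega>\<^sub>2"
    using image by simp
  then obtain C where C: "C > 0"
    and basis: "\<And>w. w \<in> \<Omega>\<^sub>1 \<Longrightarrow> \<exists>z\<in>perm_module \<Omega>\<^sub>2. d\<^sub>2 z = d\<^sub>1 (perm_basis w) \<and> l1_norm z \<le> C"
    using uniformly_bounded_basis_lifts[OF \<alpha>1 \<alpha>2 F equiv1 equiv2] by blast
  have "\<exists>y\<in>perm_module \<Omega>\<^sub>2. d\<^sub>2 y = d\<^sub>1 x \<and> l1_norm y \<le> C * l1_norm x"
    if "x \<in> perm_module \<Omega>\<^sub>1" for x
    by (rule bounded_lift_of_bounded_basis_lifts[OF lin basis that])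
  then have "filling_norm \<Omega>\<^sub>2 d\<^sub>2 m \<le> C * filling_norm \<Omega>\<^sub>1 d\<^sub>1 m" if "m \<in> M" for m
    using that image by (intro filling_norm_le_of_bounded_lift[OF C]) auto
  with C show thesis
    by (rule that)
qed

lemma equivalent_pseudo_norms_intro:
  assumes "C\<^sub>1 > 0" "C\<^sub>2 > 0" "\<And>v. v \<in> V \<Longrightarrow> n\<^sub>1 v \<ge> 0" "\<And>v. v \<in> V \<Longrightarrow> n\<^sub>2 v \<ge> 0"
    "\<And>v. v \<in> V \<Longrightarrow> n\<^sub>1 v \<le> C\<^sub>1 * n\<^sub>2 v" "\<And>v. v \<in> V \<Longrightarrow> n\<^sub>2 v \<le> C\<^sub>2 * n\<^sub>1 v"
  shows "equivalent_pseudo_norms V n\<^sub>1 n\<^sub>2"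
  unfolding equivalent_pseudo_norms_def
proof (intro exI[of _ "C\<^sub>1 + C\<^sub>2"] conjI ballI)
  fix v assume v: "v \<in> V"
  show "n\<^sub>1 v \<le> (C\<^sub>1 + C\<^sub>2) * n\<^sub>2 v"
    using assms(5)[OF v] mult_right_mono[of C\<^sub>1 "C\<^sub>1 + C\<^sub>2" "n\<^sub>2 v"] assms(2) assms(4)[OF v]
    by linarith
  show "n\<^sub>2 v \<le> (C\<^sub>1 + C\<^sub>2) * n\<^sub>1 v"
    using assms(6)[OF v] mult_right_mono[of C\<^sub>2 "C\<^sub>1 + C\<^sub>2" "n\<^sub>1 v"] assms(1) assms(3)[OF v]
    by linarith
qed (use assms(1,2) in simp)

lemma equivalent_filling_norms:
  assumes "filling G T M smul act \<Omega>\<^sub>1 \<alpha>\<^sub>1 d\<^sub>1" "filling G T M smul act \<Omega>\<^sub>2 \<alpha>\<^sub>2 d\<^sub>2"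
  shows "equivalent_pseudo_norms M (filling_norm \<Omega>\<^sub>1 d\<^sub>1) (filling_norm \<Omega>\<^sub>2 d\<^sub>2)"
proof -
  obtain C\<^sub>1 C\<^sub>2 where "C\<^sub>1 > 0" "\<And>m. m \<in> M \<Longrightarrow> filling_norm \<Omega>\<^sub>1 d\<^sub>1 m \<le> C\<^sub>1 * filling_norm \<Omega>\<^sub>2 d\<^sub>2 m"
    and "C\<^sub>2 > 0" "\<And>m. m \<in> M \<Longrightarrow> filling_norm \<Omega>\<^sub>2 d\<^sub>2 m \<le> C\<^sub>2 * filling_norm \<Omega>\<^sub>1 d\<^sub>1 m"
    using filling_norm_dominated[OF assms(2,1)] filling_norm_dominated[OF assms(1,2)] by metis
  moreover have "d\<^sub>1 ` perm_module \<Omega>\<^sub>1 = M" "d\<^sub>2 ` perm_module \<Omega>\<^sub>2 = M"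
    using assms by (simp_all add: filling_iff)
  ultimately show ?thesis
    by (intro equivalent_pseudo_norms_intro[of C\<^sub>1 C\<^sub>2]) (auto intro: filling_norm_nonneg)
qed

lemma filling_id:
  assumes "fg_proper_G_set G T \<Omega> \<alpha>"
  shows "filling G T (perm_module \<Omega>) perm_scale (perm_act G \<alpha> \<Omega>) \<Omega> \<alpha> id"
  using assms by (simp add: filling_def)

lemma filling_norm_id: "x \<in> perm_module \<Omega> \<Longrightarrow> filling_norm \<Omega> id x = l1_norm x"
proof -
  assume "x \<in> perm_module \<Omega>"
  then have "{y \<in> perm_module \<Omega>. id y = x} = {x}"
    by auto
  then show ?thesis
    unfolding filling_norm_def by simp
qed

lemma equivalent_l1_norm_eq_0D:
  assumes "equivalent_pseudo_norms (perm_module \<Omega>) n l1_norm" "x \<in> perm_module \<Omega>" "n x = 0"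
  shows "x = 0"
proof -
  obtain C where "l1_norm x \<le> C * n x"
    using assms(1,2) unfolding equivalent_pseudo_norms_def by blast
  then have "l1_norm x = 0"
    using assms(3) l1_norm_nonneg[of x] by simp
  then show ?thesis
    using l1_norm_eq_0D[OF assms(2)] by blast
qed

theorem corollary4p3:
  fixes G :: "('g, 'b) monoid_scheme" and T :: "'g topology"
    and M :: "'m::ab_group_add set" and smul :: "rat \<Rightarrow> 'm \<Rightarrow> 'm" and act :: "'g \<Rightarrow> 'm \<Rightarrow> 'm"
    and \<Omega>1 :: "'w1 set" and \<alpha>1 :: "'g \<Rightarrow> 'w1 \<Rightarrow> 'w1" and d1 :: "('w1 \<Rightarrow> rat) \<Rightarrow> 'm"
    and \<Omega>2 :: "'w2 set" and \<alpha>2 :: "'g \<Rightarrow> 'w2 \<Rightarrow> 'w2" and d2 :: "('w2 \<Rightarrow> rat) \<Rightarrow> 'm"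
    and \<Omega> :: "'w set" and \<alpha> :: "'g \<Rightarrow> 'w \<Rightarrow> 'w"
    and \<Omega>' :: "'v set" and \<alpha>' :: "'g \<Rightarrow> 'v \<Rightarrow> 'v" and d' :: "('v \<Rightarrow> rat) \<Rightarrow> ('w \<Rightarrow> rat)"
  assumes "TDLC_group G T"
  shows "(fg_discrete_QG_module G T M smul act
            \<and> filling G T M smul act \<Omega>1 \<alpha>1 d1 \<and> filling G T M smul act \<Omega>2 \<alpha>2 d2
          \<longrightarrow> equivalent_pseudo_norms M (filling_norm \<Omega>1 d1) (filling_norm \<Omega>2 d2))
       \<and> (fg_proper_G_set G T \<Omega> \<alpha>
            \<and> filling G T (perm_module \<Omega>) perm_scale (perm_act G \<alpha> \<Omega>) \<Omega>' \<alpha>' d'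
          \<longrightarrow> equivalent_pseudo_norms (perm_module \<Omega>) (filling_norm \<Omega>' d') l1_norm
              \<and> (\<forall>x\<in>perm_module \<Omega>. filling_norm \<Omega>' d' x = 0 \<longrightarrow> x = 0))"
proof (intro conjI impI)
  assume "fg_discrete_QG_module G T M smul act
            \<and> filling G T M smul act \<Omega>1 \<alpha>1 d1 \<and> filling G T M smul act \<Omega>2 \<alpha>2 d2"
  then show "equivalent_pseudo_norms M (filling_norm \<Omega>1 d1) (filling_norm \<Omega>2 d2)"
    using equivalent_filling_norms by blast
next
  assume "fg_proper_G_set G T \<Omega> \<alpha> \<and> filling G T (perm_module \<Omega>) perm_scale (perm_act G \<alpha> \<Omega>) \<Omega>' \<alpha>' d'"
  then have "equivalent_pseudo_norms (perm_module \<Omega>) (filling_norm \<Omega>' d') (filling_norm \<Omega> id)"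
    using equivalent_filling_norms filling_id by blast
  then show "equivalent_pseudo_norms (perm_module \<Omega>) (filling_norm \<Omega>' d') l1_norm"
    unfolding equivalent_pseudo_norms_def by (simp add: filling_norm_id)
  then show "\<forall>x\<in>perm_module \<Omega>. filling_norm \<Omega>' d' x = 0 \<longrightarrow> x = 0"
    using equivalent_l1_norm_eq_0D by blast
qed

end
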